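(* Let $\rho\in(0,1)$ and let $(\gamma_{n})_{n\in\mathbb{N}}$ be nonnegative integrable functions on $[0,\infty)$ with $\int_{0}^{\infty}\gamma_{n}(t)dt\le\rho$ for all $n$. For $\theta\le\rho-1-\log\rho$ let $x(\theta)$ be the minimal real solution of $x=\theta+(e^{x}-1)\rho$. For a measurable function $t\mapsto f(t,\theta)$ on $[0,\infty)$ define $$F_{n}(t,\theta):=\theta+\int_{0}^{t}\left(e^{f(t-s,\theta)}-1\right)\gamma_{n}(s)\,ds,\qquad t\ge0.$$ (a) If $0\le\theta\le\rho-1-\log\rho$ and $f(t,\theta)\le x(\theta)$ for all $t\ge0$, then $F_{n}(t,\theta)\le x(\theta)$ for all $t\ge0$ and $n\in\mathbb{N}$. (b) If $\theta\le0$ and $f(t,\theta)\ge x(\theta)$ for all $t\ge0$, then $F_{n}(t,\theta)\ge x(\theta)$ for all $t\ge0$ and $n\in\mathbb{N}$. *)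

theory Defs
  imports "HOL-Analysis.Analysis"
begin

definition xmin :: "real \<Rightarrow> real \<Rightarrow> real" where
  "xmin \<rho> \<theta> = (LEAST x. x = \<theta> + (exp x - 1) * \<rho>)"

definition Fn :: "(nat \<Rightarrow> real \<Rightarrow> real) \<Rightarrow> (real \<Rightarrow> real \<Rightarrow> real) \<Rightarrow> nat \<Rightarrow> real \<Rightarrow> real \<Rightarrow> real" where
  "Fn \<gamma> f n t \<theta> = \<theta> + (LINT s:{0..t}|lborel. (exp (f (t - s) \<theta>) - 1) * \<gamma> n s)"

end

theory Submission
  imports Defs
begin

text \<open>Since \<open>\<gamma>\<^sub>n \<ge> 0\<close> has mass at most \<open>\<rho>\<close> on \<open>[0,t]\<close>, a bound
  \<open>f \<le> x\<close> (resp. \<open>f \<ge> x\<close>) gives \<open>F\<^sub>n \<le> \<theta> + (e\<^sup>x - 1)\<rho> = x\<close> (resp. \<open>\<ge>\<close>), provided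
  \<open>e\<^sup>x - 1\<close> has the right sign: \<open>x \<ge> 0\<close> when \<open>\<theta> \<ge> 0\<close> because \<open>\<rho> < 1\<close>, and \<open>x \<le> 0\<close> when
  \<open>\<theta> \<le> 0\<close> because then the equation already has a root in \<open>(-\<infinity>,0]\<close> and \<open>x\<close> is the least one.
  The hypothesis \<open>\<theta> \<le> \<rho> - 1 - log \<rho>\<close> guarantees that a root exists at all.\<close>

lemma fixed_point_exists_below:
  fixes \<rho> \<theta> b :: real
  assumes "0 < \<rho>" and "\<theta> + (exp b - 1) * \<rho> \<le> b"
  shows "\<exists>z\<le>b. z = \<theta> + (exp z - 1) * \<rho>"
proof -
  define g where "g y = \<theta> + (exp y - 1) * \<rho> - y" for y
  have "g (\<theta> - \<rho> - 1) \<ge> 0"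
    using \<open>0 < \<rho>\<close> by (simp add: g_def algebra_simps)
  moreover have "g b \<le> 0"
    using assms(2) by (simp add: g_def)
  moreover have "\<theta> - \<rho> - 1 \<le> b"
    using assms(2) mult_pos_pos[OF exp_gt_zero \<open>0 < \<rho>\<close>, of b] by (simp add: left_diff_distrib)
  moreover have "continuous_on {\<theta> - \<rho> - 1..b} g"
    unfolding g_def by (intro continuous_intros)
  ultimately obtain z where "z \<le> b" "g z = 0"
    using IVT2'[of g b 0 "\<theta> - \<rho> - 1"] by auto
  then show ?thesis
    by (auto simp: g_def)
qed

lemma
  fixes \<rho> \<theta> b :: real
  assumes "0 < \<rho>" and "\<theta> + (exp b - 1) * \<rho> \<le> b"
  shows xmin_fixed_point: "xmin \<rho> \<theta> = \<theta> + (exp (xmin \<rho> \<theta>) - 1) * \<rho>"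
    and xmin_le_fixed_point: "y = \<theta> + (exp y - 1) * \<rho> \<Longrightarrow> xmin \<rho> \<theta> \<le> y"
proof -
  define Z where "Z = {y. y = \<theta> + (exp y - 1) * \<rho>}"
  have "Z \<noteq> {}"
    using fixed_point_exists_below[OF assms] by (auto simp: Z_def)
  moreover have bdd: "bdd_below Z"
  proof (rule bdd_belowI)
    fix y assume "y \<in> Z"
    then show "\<theta> - \<rho> \<le> y"
      using \<open>0 < \<rho>\<close> by (simp add: Z_def algebra_simps)
  qed
  moreover have "closed Z"
    unfolding Z_def by (intro closed_Collect_eq continuous_intros)
  ultimately have "Inf Z \<in> Z"
    by (rule closed_contains_Inf)
  moreover have "xmin \<rho> \<theta> = Inf Z"
    unfolding xmin_def
    by (rule Least_equality) (use \<open>Inf Z \<in> Z\<close> bdd in \<open>auto simp: Z_def intro: cInf_lower\<close>)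
  ultimately show "xmin \<rho> \<theta> = \<theta> + (exp (xmin \<rho> \<theta>) - 1) * \<rho>"
    and "y = \<theta> + (exp y - 1) * \<rho> \<Longrightarrow> xmin \<rho> \<theta> \<le> y"
    using bdd by (auto simp: Z_def intro: cInf_lower)
qed

lemma fixed_point_nonneg:
  fixes \<rho> \<theta> y :: real
  assumes "0 \<le> \<rho>" "\<rho> < 1" "0 \<le> \<theta>" and "y = \<theta> + (exp y - 1) * \<rho>"
  shows "0 \<le> y"
proof (rule ccontr)
  assume "\<not> 0 \<le> y"
  then have "y < y * \<rho>"
    using \<open>\<rho> < 1\<close> by (simp add: mult_less_cancel_left_neg)
  also have "\<dots> \<le> (exp y - 1) * \<rho>"
    using mult_right_mono[OF _ \<open>0 \<le> \<rho>\<close>, of y "exp y - 1"] exp_ge_add_one_self[of y] by linarith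
  finally show False
    using assms(3,4) by linarith
qed

lemma xmin_nonpos:
  fixes \<rho> \<theta> :: real
  assumes "0 < \<rho>" and "\<theta> \<le> 0"
  shows "xmin \<rho> \<theta> \<le> 0"
proof -
  have root: "\<theta> + (exp 0 - 1) * \<rho> \<le> 0"
    using \<open>\<theta> \<le> 0\<close> by simp
  obtain z where "z \<le> 0" "z = \<theta> + (exp z - 1) * \<rho>"
    using fixed_point_exists_below[OF \<open>0 < \<rho>\<close> root] by blast
  then show ?thesis
    using xmin_le_fixed_point[OF \<open>0 < \<rho>\<close> root] by fastforce
qed

lemma set_integral_mono_set_nonneg:
  fixes g :: "'a \<Rightarrow> real"
  assumes "set_integrable M A g" "B \<in> sets M" "B \<subseteq> A" "\<And>x. x \<in> A \<Longrightarrow> 0 \<le> g x"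
  shows "(LINT x:B|M. g x) \<le> (LINT x:A|M. g x)"
proof -
  have "set_integrable M B g"
    using assms(1-3) by (rule set_integrable_subset)
  then show ?thesis
    using assms unfolding set_integrable_def set_lebesgue_integral_def
    by (intro integral_mono) (auto split: split_indicator)
qed

text \<open>No integrability of \<open>h\<close> is needed: otherwise its integral is \<open>0\<close>, which is still below
  \<open>c * r\<close> since \<open>r\<close> bounds a nonnegative integral.\<close>

lemma set_integral_le_mult_bound:
  fixes g h :: "'a \<Rightarrow> real"
  assumes g: "set_integrable M A g" "\<And>x. x \<in> A \<Longrightarrow> 0 \<le> g x" "(LINT x:A|M. g x) \<le> r"
    and h: "\<And>x. x \<in> A \<Longrightarrow> h x \<le> c * g x" and "0 \<le> c"
  shows "(LINT x:A|M. h x) \<le> c * r"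
proof -
  have "0 \<le> (LINT x:A|M. g x)"
    unfolding set_lebesgue_integral_def
    by (intro integral_nonneg_AE) (auto simp: indicator_def g(2))
  then have bound: "c * (LINT x:A|M. g x) \<le> c * r"
    using g(3) \<open>0 \<le> c\<close> by (intro mult_left_mono) auto
  show ?thesis
  proof (cases "set_integrable M A h")
    case True
    have "(LINT x:A|M. h x) \<le> (LINT x:A|M. c * g x)"
      using True g(1) h by (intro set_integral_mono) auto
    with bound show ?thesis
      by simp
  next
    case False
    then have "(LINT x:A|M. h x) = 0"
      unfolding set_integrable_def set_lebesgue_integral_def by (simp add: not_integrable_integral_eq)
    with bound show ?thesis
      using mult_nonneg_nonneg[OF \<open>0 \<le> c\<close> \<open>0 \<le> (LINT x:A|M. g x)\<close>] by linarith
  qed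
qed

lemma set_integral_ge_mult_bound:
  fixes g h :: "'a \<Rightarrow> real"
  assumes "set_integrable M A g" "\<And>x. x \<in> A \<Longrightarrow> 0 \<le> g x" "(LINT x:A|M. g x) \<le> r"
    and "\<And>x. x \<in> A \<Longrightarrow> c * g x \<le> h x" and "c \<le> 0"
  shows "c * r \<le> (LINT x:A|M. h x)"
proof -
  have "(LINT x:A|M. - h x) \<le> - c * r"
    using assms by (intro set_integral_le_mult_bound[of M A g]) auto
  moreover have "(LINT x:A|M. - h x) = - (LINT x:A|M. h x)"
    unfolding set_lebesgue_integral_def by simp
  ultimately show ?thesis
    by simp
qed

lemma Fn_le:
  assumes "set_integrable lborel {0..t} (\<gamma> n)" "\<And>s. s \<in> {0..t} \<Longrightarrow> 0 \<le> \<gamma> n s"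
    and "(LINT s:{0..t}|lborel. \<gamma> n s) \<le> \<rho>"
    and "\<And>s. s \<in> {0..t} \<Longrightarrow> f s \<theta> \<le> y" and "0 \<le> y"
  shows "Fn \<gamma> f n t \<theta> \<le> \<theta> + (exp y - 1) * \<rho>"
proof -
  have "(exp (f (t - s) \<theta>) - 1) * \<gamma> n s \<le> (exp y - 1) * \<gamma> n s" if "s \<in> {0..t}" for s
    using that assms(2,4)[of "t - s"] assms(2)[of s] by (intro mult_right_mono) auto
  then have "(LINT s:{0..t}|lborel. (exp (f (t - s) \<theta>) - 1) * \<gamma> n s) \<le> (exp y - 1) * \<rho>"
    using assms(1-3) \<open>0 \<le> y\<close> by (intro set_integral_le_mult_bound[of lborel "{0..t}" "\<gamma> n"]) auto
  then show ?thesis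
    unfolding Fn_def by linarith
qed

lemma Fn_ge:
  assumes "set_integrable lborel {0..t} (\<gamma> n)" "\<And>s. s \<in> {0..t} \<Longrightarrow> 0 \<le> \<gamma> n s"
    and "(LINT s:{0..t}|lborel. \<gamma> n s) \<le> \<rho>"
    and "\<And>s. s \<in> {0..t} \<Longrightarrow> y \<le> f s \<theta>" and "y \<le> 0"
  shows "\<theta> + (exp y - 1) * \<rho> \<le> Fn \<gamma> f n t \<theta>"
proof -
  have "(exp y - 1) * \<gamma> n s \<le> (exp (f (t - s) \<theta>) - 1) * \<gamma> n s" if "s \<in> {0..t}" for s
    using that assms(2,4)[of "t - s"] assms(2)[of s] by (intro mult_right_mono) auto
  then have "(exp y - 1) * \<rho> \<le> (LINT s:{0..t}|lborel. (exp (f (t - s) \<theta>) - 1) * \<gamma> n s)"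
    using assms(1-3) \<open>y \<le> 0\<close> by (intro set_integral_ge_mult_bound[of lborel "{0..t}" "\<gamma> n"]) auto
  then show ?thesis
    unfolding Fn_def by linarith
qed

theorem lemma4p6:
  fixes \<rho> \<theta> :: real and \<gamma> :: "nat \<Rightarrow> real \<Rightarrow> real" and f :: "real \<Rightarrow> real \<Rightarrow> real"
  assumes \<rho>: "0 < \<rho>" "\<rho> < 1"
    and \<gamma>_nonneg: "\<And>n s. 0 \<le> s \<Longrightarrow> 0 \<le> \<gamma> n s"
    and \<gamma>_int: "\<And>n. set_integrable lborel {0..} (\<gamma> n)"
    and \<gamma>_bound: "\<And>n. (LINT s:{0..}|lborel. \<gamma> n s) \<le> \<rho>"
    and \<theta>_dom: "\<theta> \<le> \<rho> - 1 - ln \<rho>"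
    and f_meas: "set_borel_measurable lborel {0..} (\<lambda>t. f t \<theta>)"
  shows "(0 \<le> \<theta> \<and> (\<forall>t\<ge>0. f t \<theta> \<le> xmin \<rho> \<theta>) \<longrightarrow>
            (\<forall>n t. 0 \<le> t \<longrightarrow> Fn \<gamma> f n t \<theta> \<le> xmin \<rho> \<theta>))
       \<and> (\<theta> \<le> 0 \<and> (\<forall>t\<ge>0. f t \<theta> \<ge> xmin \<rho> \<theta>) \<longrightarrow>
            (\<forall>n t. 0 \<le> t \<longrightarrow> Fn \<gamma> f n t \<theta> \<ge> xmin \<rho> \<theta>))"
proof -
  have "\<theta> + (exp (- ln \<rho>) - 1) * \<rho> \<le> - ln \<rho>"
    using \<rho> \<theta>_dom by (simp add: exp_minus algebra_simps)
  note x_fixed = xmin_fixed_point[OF \<open>0 < \<rho>\<close> this]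
  have \<gamma>_int_t: "set_integrable lborel {0..t} (\<gamma> n)" for n t
    by (rule set_integrable_subset[OF \<gamma>_int]) auto
  have \<gamma>_bound_t: "(LINT s:{0..t}|lborel. \<gamma> n s) \<le> \<rho>" for n t
    using set_integral_mono_set_nonneg[OF \<gamma>_int[of n], of "{0..t}"] \<gamma>_nonneg \<gamma>_bound[of n] by force
  have "Fn \<gamma> f n t \<theta> \<le> xmin \<rho> \<theta>"
    if "0 \<le> \<theta>" "\<forall>t\<ge>0. f t \<theta> \<le> xmin \<rho> \<theta>" for n t
  proof -
    have "Fn \<gamma> f n t \<theta> \<le> \<theta> + (exp (xmin \<rho> \<theta>) - 1) * \<rho>"
      using that fixed_point_nonneg[OF _ \<open>\<rho> < 1\<close> \<open>0 \<le> \<theta>\<close> x_fixed] \<rho>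
      by (intro Fn_le[where \<gamma>=\<gamma> and n=n, OF \<gamma>_int_t[of t n] _ \<gamma>_bound_t[of t n]]) (auto intro: \<gamma>_nonneg)
    with x_fixed show ?thesis
      by linarith
  qed
  moreover have "xmin \<rho> \<theta> \<le> Fn \<gamma> f n t \<theta>"
    if "\<theta> \<le> 0" "\<forall>t\<ge>0. xmin \<rho> \<theta> \<le> f t \<theta>" for n t
  proof -
    have "\<theta> + (exp (xmin \<rho> \<theta>) - 1) * \<rho> \<le> Fn \<gamma> f n t \<theta>"
      using that xmin_nonpos[OF \<open>0 < \<rho>\<close> \<open>\<theta> \<le> 0\<close>]
      by (intro Fn_ge[where \<gamma>=\<gamma> and n=n, OF \<gamma>_int_t[of t n] _ \<gamma>_bound_t[of t n]]) (auto intro: \<gamma>_nonneg)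
    with x_fixed show ?thesis
      by linarith
  qed
  ultimately show ?thesis
    by blast
qed

end
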